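(* Let $K$ be a field, $s\ge2$, $S=K[t_1,\ldots,t_s]$ with each $t_i$ of degree $1$, and let $\mathcal{L}\subset\mathbb{Z}^s$ be a homogeneous lattice of rank $s-1$ generated as a $\mathbb{Z}$-module by the rows of an integral matrix $A$. Then $\deg S/I(\mathcal{L})=d_1\cdots d_{s-1}$, where $d_1,\ldots,d_{s-1}$ are the invariant factors of $A$.
   Context: A lattice is a subgroup of $\mathbb{Z}^s$; it is homogeneous if $\sum_ia_i=0$ for all $a\in\mathcal{L}$. For $a\in\mathbb{Z}^s$ write $a=a^+-a^-$ with $a^+,a^-\in\mathbb{N}^s$ of disjoint supports; $I(\mathcal{L})=(\{t^{a^+}-t^{a^-}:a\in\mathcal{L}\})$. The invariant factors of $A$ are the positive diagonal entries $d_1\mid d_2\mid\cdots$ of its Smith normal form. For a graded ideal $I$, with Hilbert function $H_I(d)=\dim_K S_d/I_d$ and Hilbert polynomial $h_I(t)=c_kt^k+\cdots$ (agreeing with $H_I(d)$ for $d\gg0$; $k=-1$ meaning $h_I=0$), $\deg S/I=c_k\,k!$ if $k\ge0$ and $\dim_K S/I$ if $k=-1$. *)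

theory Defs
  imports Main "HOL-Library.Poly_Mapping" "HOL-Computational_Algebra.Polynomial"
begin

text \<open>Monomials are exponent vectors (nat =>0 nat); polynomials are finitely supported
  maps from monomials to coefficients in the field K, with the convolution product of
  Poly_Mapping.  Variables are indexed 0..s-1 instead of 1..s.\<close>

type_synonym 'k mpoly = "(nat \<Rightarrow>\<^sub>0 nat) \<Rightarrow>\<^sub>0 'k"

definition tdeg :: "(nat \<Rightarrow>\<^sub>0 nat) \<Rightarrow> nat" where
  "tdeg e = (\<Sum>j\<in>Poly_Mapping.keys e. Poly_Mapping.lookup e j)"

definition monomials_in :: "nat \<Rightarrow> (nat \<Rightarrow>\<^sub>0 nat) set" where
  "monomials_in s = {e. Poly_Mapping.keys e \<subseteq> {..<s}}"

definition polys :: "nat \<Rightarrow> 'k::field mpoly set" where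
  "polys s = {p. Poly_Mapping.keys p \<subseteq> monomials_in s}"

definition polys_deg :: "nat \<Rightarrow> nat \<Rightarrow> 'k::field mpoly set" where
  "polys_deg s d = {p. Poly_Mapping.keys p \<subseteq> {e \<in> monomials_in s. tdeg e = d}}"

definition smult_mp :: "'k::field \<Rightarrow> 'k mpoly \<Rightarrow> 'k mpoly" where
  "smult_mp c p = Poly_Mapping.single 0 c * p"

definition monomial :: "(nat \<Rightarrow>\<^sub>0 nat) \<Rightarrow> 'k::field mpoly" where
  "monomial e = Poly_Mapping.single e 1"

definition gen_ideal :: "nat \<Rightarrow> 'k::field mpoly set \<Rightarrow> 'k mpoly set" where
  "gen_ideal s G = {p. \<exists>(n::nat) q g. (\<forall>i<n. q i \<in> polys s \<and> g i \<in> G) \<and> p = (\<Sum>i<n. q i * g i)}"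

text \<open>H_I(d) = dim_K S_d / I_d: the maximal size of a finite family in S_d that is
  K-linearly independent modulo I.\<close>
definition hilbert_fun :: "nat \<Rightarrow> 'k::field mpoly set \<Rightarrow> nat \<Rightarrow> nat" where
  "hilbert_fun s I d = Max {card B | B. finite B \<and> B \<subseteq> polys_deg s d \<and>
      (\<forall>c. (\<Sum>b\<in>B. smult_mp (c b) b) \<in> I \<longrightarrow> (\<forall>b\<in>B. c b = 0))}"

definition hilbert_poly :: "nat \<Rightarrow> 'k::field mpoly set \<Rightarrow> rat poly" where
  "hilbert_poly s I = (THE h. eventually (\<lambda>d. of_nat (hilbert_fun s I d) = poly h (of_nat d)) sequentially)"

definition deg_quot :: "nat \<Rightarrow> 'k::field mpoly set \<Rightarrow> rat" where
  "deg_quot s I = (let h = hilbert_poly s I in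
     if h = 0 then of_nat (\<Sum>d\<in>{d. hilbert_fun s I d \<noteq> 0}. hilbert_fun s I d)
     else lead_coeff h * fact (Polynomial.degree h))"

text \<open>Vectors of Z^s are functions nat => int, only indices < s being relevant.
  An m x s integer matrix is a function nat => nat => int (row, column).\<close>

definition row_lattice :: "nat \<Rightarrow> nat \<Rightarrow> (nat \<Rightarrow> nat \<Rightarrow> int) \<Rightarrow> (nat \<Rightarrow> int) set" where
  "row_lattice m s A = {v. \<exists>c::nat \<Rightarrow> int. \<forall>j. v j = (if j < s then (\<Sum>i<m. c i * A i j) else 0)}"

definition homogeneous_lattice :: "nat \<Rightarrow> (nat \<Rightarrow> int) set \<Rightarrow> bool" where
  "homogeneous_lattice s L \<longleftrightarrow> (\<forall>a\<in>L. (\<Sum>j<s. a j) = 0)"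

definition lattice_rank :: "(nat \<Rightarrow> int) set \<Rightarrow> nat" where
  "lattice_rank L = Max {card B | B. finite B \<and> B \<subseteq> L \<and>
      (\<forall>c::(nat \<Rightarrow> int) \<Rightarrow> int. (\<forall>j. (\<Sum>b\<in>B. c b * b j) = 0) \<longrightarrow> (\<forall>b\<in>B. c b = 0))}"

definition pos_part :: "nat \<Rightarrow> (nat \<Rightarrow> int) \<Rightarrow> (nat \<Rightarrow>\<^sub>0 nat)" where
  "pos_part s a = Abs_poly_mapping (\<lambda>j. if j < s then nat (a j) else 0)"

definition neg_part :: "nat \<Rightarrow> (nat \<Rightarrow> int) \<Rightarrow> (nat \<Rightarrow>\<^sub>0 nat)" where
  "neg_part s a = Abs_poly_mapping (\<lambda>j. if j < s then nat (- a j) else 0)"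

definition lattice_ideal :: "nat \<Rightarrow> (nat \<Rightarrow> int) set \<Rightarrow> 'k::field mpoly set" where
  "lattice_ideal s L = gen_ideal s {monomial (pos_part s a) - monomial (neg_part s a) | a. a \<in> L}"

definition mat_mul :: "nat \<Rightarrow> (nat \<Rightarrow> nat \<Rightarrow> int) \<Rightarrow> (nat \<Rightarrow> nat \<Rightarrow> int) \<Rightarrow> nat \<Rightarrow> nat \<Rightarrow> int" where
  "mat_mul n X Y = (\<lambda>i j. \<Sum>k<n. X i k * Y k j)"

definition unimodular :: "nat \<Rightarrow> (nat \<Rightarrow> nat \<Rightarrow> int) \<Rightarrow> bool" where
  "unimodular n X \<longleftrightarrow> (\<exists>Y. \<forall>i<n. \<forall>j<n.
      mat_mul n X Y i j = (if i = j then 1 else 0) \<and> mat_mul n Y X i j = (if i = j then 1 else 0))"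

definition smith_nf :: "nat \<Rightarrow> nat \<Rightarrow> (nat \<Rightarrow> nat \<Rightarrow> int) \<Rightarrow> (nat \<Rightarrow> nat \<Rightarrow> int) \<Rightarrow> bool" where
  "smith_nf m s A D \<longleftrightarrow>
     (\<exists>P Q. unimodular m P \<and> unimodular s Q \<and>
        (\<forall>i<m. \<forall>j<s. D i j = mat_mul s (mat_mul m P A) Q i j)) \<and>
     (\<forall>i<m. \<forall>j<s. i \<noteq> j \<longrightarrow> D i j = 0) \<and>
     (\<forall>i<min m s. D i i \<ge> 0) \<and>
     (\<forall>i. i + 1 < min m s \<longrightarrow> D i i dvd D (i + 1) (i + 1))"

text \<open>Product of the invariant factors (the positive diagonal entries of a Smith normal form).\<close>
definition invariant_factor_prod :: "nat \<Rightarrow> nat \<Rightarrow> (nat \<Rightarrow> nat \<Rightarrow> int) \<Rightarrow> int" where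
  "invariant_factor_prod m s D = (\<Prod>i\<in>{i. i < min m s \<and> D i i > 0}. D i i)"

end

theory Submission
  imports Defs "HOL-Library.FuncSet"
begin

text \<open>In degree \<open>d\<close>, \<open>S/I(\<L>)\<close> has a basis indexed by the classes of degree-\<open>d\<close> monomials
  modulo \<open>\<L>\<close>, since \<open>I(\<L>)\<close> is spanned there by the binomials \<open>t\<^sup>u - t\<^sup>v\<close> with
  \<open>u - v \<in> \<L>\<close>.  Writing \<open>D = P A Q\<close> in Smith form, \<open>v \<in> \<L>\<close> iff \<open>d\<^sub>k\<close> divides
  \<open>(v Q)\<^sub>k\<close> for all \<open>k\<close>.  Rank \<open>s - 1\<close> forces \<open>d\<^sub>1, \<dots>, d\<^sub>s\<^sub>-\<^sub>1 > 0 = d\<^sub>s\<close>, and homogeneity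
  makes the coordinate sum of \<open>v\<close> equal to \<open>\<plusminus>(v Q)\<^sub>s\<close>.  So two monomials of the same degree are
  congruent iff their first \<open>s - 1\<close> transformed coordinates agree modulo \<open>d\<^sub>k\<close>, and for large
  \<open>d\<close> every residue pattern occurs.  Hence \<open>H(d) = d\<^sub>1 \<cdots> d\<^sub>s\<^sub>-\<^sub>1\<close> eventually: the Hilbert
  polynomial is this constant, which is then the degree.\<close>

section \<open>Linear algebra over an integral domain\<close>

lemma homogeneous_system_nontrivial_solution:
  fixes f :: "'b \<Rightarrow> 'j \<Rightarrow> 'a::idom"
  assumes "finite J" "finite B" "card B > card J"
  shows "\<exists>c. (\<forall>j\<in>J. (\<Sum>b\<in>B. c b * f b j) = 0) \<and> (\<exists>b\<in>B. c b \<noteq> 0)"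
  using assms
proof (induction J arbitrary: B f rule: finite_induct)
  case empty
  then have "B \<noteq> {}" by auto
  then show ?case by (intro exI[of _ "\<lambda>_. 1"]) auto
next
  case (insert j0 J B f)
  show ?case
  proof (cases "\<forall>b\<in>B. f b j0 = 0")
    case True
    from insert have "card B > card J" by simp
    from insert.IH[OF insert.prems(1) this] obtain c where
      "\<forall>j\<in>J. (\<Sum>b\<in>B. c b * f b j) = 0" "\<exists>b\<in>B. c b \<noteq> 0" by blast
    with True show ?thesis by (intro exI[of _ c]) auto
  next
    case False
    then obtain b0 where b0: "b0 \<in> B" "f b0 j0 \<noteq> 0" by blast
    define B' where "B' = B - {b0}"
    \<comment> \<open>Gaussian elimination: clear the coefficient of \<open>j0\<close> with the pivot \<open>b0\<close>.\<close>
    define g where "g b j = f b0 j0 * f b j - f b j0 * f b0 j" for b j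
    have "finite B'" "card B' > card J"
      using insert b0 by (auto simp: B'_def card_Diff_singleton)
    from insert.IH[OF this, of g] obtain c' where
      c': "\<forall>j\<in>J. (\<Sum>b\<in>B'. c' b * g b j) = 0" "\<exists>b\<in>B'. c' b \<noteq> 0" by blast
    define c where "c b = (if b = b0 then - (\<Sum>b\<in>B'. c' b * f b j0) else c' b * f b0 j0)" for b
    have c_g: "(\<Sum>b\<in>B. c b * f b j) = (\<Sum>b\<in>B'. c' b * g b j)" for j
    proof -
      have "(\<Sum>b\<in>B. c b * f b j) = c b0 * f b0 j + (\<Sum>b\<in>B'. c b * f b j)"
        using b0 insert.prems(1) by (simp add: B'_def sum.remove)
      also have "(\<Sum>b\<in>B'. c b * f b j) = (\<Sum>b\<in>B'. c' b * f b0 j0 * f b j)"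
        by (rule sum.cong) (auto simp: c_def B'_def)
      also have "c b0 * f b0 j = - (\<Sum>b\<in>B'. c' b * f b j0 * f b0 j)"
        by (simp add: c_def sum_distrib_right)
      finally show ?thesis
        by (simp add: g_def sum_subtractf sum_distrib_left algebra_simps)
    qed
    show ?thesis
    proof (intro exI[of _ c] conjI)
      show "\<forall>j\<in>insert j0 J. (\<Sum>b\<in>B. c b * f b j) = 0"
        using c'(1) by (auto simp: c_g g_def mult.commute)
      from c'(2) obtain b1 where "b1 \<in> B'" "c' b1 \<noteq> 0" by blast
      with b0 show "\<exists>b\<in>B. c b \<noteq> 0"
        by (intro bexI[of _ b1]) (auto simp: c_def B'_def)
    qed
  qed
qed

lemma sum_lessThan_add_split:
  fixes n m :: nat
  shows "(\<Sum>i<n + m. f i) = (\<Sum>i<n. f i) + (\<Sum>i<m. f (n + i) :: 'a::comm_monoid_add)"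
  by (induction m) (auto simp: add.assoc)

section \<open>Polynomials and monomials\<close>

lemma lookup_smult_mp: "Poly_Mapping.lookup (smult_mp c p) e = c * Poly_Mapping.lookup p e"
  unfolding smult_mp_def mult_map_scale_conv_mult[symmetric]
  by (simp add: map.rep_eq when_def)

lemma lookup_mult_single_one:
  fixes q :: "'a::cancel_comm_monoid_add \<Rightarrow>\<^sub>0 'b::semiring_1"
  shows "Poly_Mapping.lookup (q * Poly_Mapping.single a 1) e =
    (\<Sum>l. Poly_Mapping.lookup q l when e = l + a)"
proof -
  have "(\<Sum>x. Poly_Mapping.lookup (Poly_Mapping.single a 1) x when e = l + x) = ((1::'b) when e = l + a)"
    for l
  proof -
    have "(\<lambda>x. Poly_Mapping.lookup (Poly_Mapping.single a (1::'b)) x when e = l + x) =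
        (\<lambda>x. (1 when e = l + a) when a = x)"
      by (auto simp: fun_eq_iff when_def lookup_single)
    then show ?thesis by (simp only: Sum_any_when_equal')
  qed
  then show ?thesis by (simp add: lookup_mult mult_when)
qed

lemma poly_mapping_eq_sum_single:
  assumes "finite S" "Poly_Mapping.keys p \<subseteq> S"
  shows "p = (\<Sum>e\<in>S. Poly_Mapping.single e (Poly_Mapping.lookup p e))"
proof (rule poly_mapping_eqI)
  fix k
  have "(\<Sum>e\<in>S. Poly_Mapping.lookup (Poly_Mapping.single e (Poly_Mapping.lookup p e)) k) =
      (\<Sum>e\<in>S. if e = k then Poly_Mapping.lookup p e else 0)"
    by (rule sum.cong) (auto simp: lookup_single when_def)
  also have "\<dots> = Poly_Mapping.lookup p k"
    using assms by (auto simp: in_keys_iff)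
  finally show "Poly_Mapping.lookup p k =
      Poly_Mapping.lookup (\<Sum>e\<in>S. Poly_Mapping.single e (Poly_Mapping.lookup p e)) k"
    by (simp add: lookup_sum)
qed

lemma single_sum: "Poly_Mapping.single k (sum f A) = (\<Sum>x\<in>A. Poly_Mapping.single k (f x))"
  by (rule poly_mapping_eqI) (auto simp: lookup_sum lookup_single when_def)

lemma keys_add_nat:
  "Poly_Mapping.keys (a + b :: 'x \<Rightarrow>\<^sub>0 nat) = Poly_Mapping.keys a \<union> Poly_Mapping.keys b"
  by (auto simp: in_keys_iff lookup_add)

lemma tdeg_eq_sum_superset:
  assumes "finite S" "Poly_Mapping.keys e \<subseteq> S"
  shows "tdeg e = (\<Sum>j\<in>S. Poly_Mapping.lookup e j)"
  unfolding tdeg_def by (rule sum.mono_neutral_left) (use assms in \<open>auto simp: in_keys_iff\<close>)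

lemma tdeg_add: "tdeg (a + b) = tdeg a + tdeg b"
proof -
  let ?S = "Poly_Mapping.keys a \<union> Poly_Mapping.keys b"
  have "tdeg (a + b) = (\<Sum>j\<in>?S. Poly_Mapping.lookup (a + b) j)"
    by (rule tdeg_eq_sum_superset) (auto simp: keys_add_nat)
  also have "\<dots> = (\<Sum>j\<in>?S. Poly_Mapping.lookup a j) + (\<Sum>j\<in>?S. Poly_Mapping.lookup b j)"
    by (simp add: lookup_add sum.distrib)
  also have "\<dots> = tdeg a + tdeg b"
    by (simp add: tdeg_eq_sum_superset[symmetric])
  finally show ?thesis .
qed

lemma lookup_le_tdeg: "Poly_Mapping.lookup e j \<le> tdeg e"
  unfolding tdeg_def
  by (cases "j \<in> Poly_Mapping.keys e") (auto intro: member_le_sum simp: in_keys_iff)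

definition monomials_deg :: "nat \<Rightarrow> nat \<Rightarrow> (nat \<Rightarrow>\<^sub>0 nat) set" where
  "monomials_deg s d = {e \<in> monomials_in s. tdeg e = d}"

definition exps :: "(nat \<Rightarrow>\<^sub>0 nat) \<Rightarrow> nat \<Rightarrow> int" where
  "exps e j = int (Poly_Mapping.lookup e j)"

lemma finite_monomials_deg: "finite (monomials_deg s d)"
proof -
  have "Poly_Mapping.lookup ` monomials_deg s d \<subseteq>
      {f. \<forall>x. (x \<in> {..<s} \<longrightarrow> f x \<in> {0..d}) \<and> (x \<notin> {..<s} \<longrightarrow> f x = 0)}"
  proof (clarsimp, intro conjI allI impI)
    fix e x assume "e \<in> monomials_deg s d"
    then have e: "Poly_Mapping.keys e \<subseteq> {..<s}" "tdeg e = d"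
      by (auto simp: monomials_deg_def monomials_in_def)
    show "Poly_Mapping.lookup e x \<le> d" using lookup_le_tdeg e by metis
    assume "\<not> x < s" then show "Poly_Mapping.lookup e x = 0" using e by (auto simp: in_keys_iff)
  qed
  then have "finite (Poly_Mapping.lookup ` monomials_deg s d)"
    by (rule finite_subset) (intro finite_set_of_finite_funs, auto)
  then show ?thesis by (rule finite_imageD) (auto simp: inj_on_def)
qed

lemma exps_eq_0: "u \<in> monomials_deg s d \<Longrightarrow> \<not> j < s \<Longrightarrow> exps u j = 0"
  by (auto simp: monomials_deg_def monomials_in_def exps_def in_keys_iff)

lemma sum_exps: "u \<in> monomials_deg s d \<Longrightarrow> (\<Sum>j<s. exps u j) = int d"
  using tdeg_eq_sum_superset[of "{..<s}" u] by (auto simp: monomials_deg_def monomials_in_def exps_def)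

lemma monomial_with_exps:
  assumes nonneg: "\<And>l. x l \<ge> 0" and supp: "\<And>l. \<not> l < s \<Longrightarrow> x l = 0"
    and sum: "(\<Sum>l<s. x l) = int d"
  shows "\<exists>u\<in>monomials_deg s d. exps u = x"
proof -
  define u where "u = Abs_poly_mapping (\<lambda>l. nat (x l))"
  have "finite {l. nat (x l) \<noteq> 0}"
    by (rule finite_subset[of _ "{..<s}"]) (use supp in fastforce)+
  then have lookup_u: "Poly_Mapping.lookup u = (\<lambda>l. nat (x l))"
    unfolding u_def by (rule lookup_Abs_poly_mapping)
  have exps_u: "exps u = x" using nonneg by (simp add: fun_eq_iff exps_def lookup_u)
  have "u \<in> monomials_in s" using supp by (fastforce simp: monomials_in_def in_keys_iff lookup_u)
  moreover have "int (tdeg u) = (\<Sum>l<s. exps u l)"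
    using calculation tdeg_eq_sum_superset[of "{..<s}" u] by (simp add: monomials_in_def exps_def)
  ultimately have "u \<in> monomials_deg s d" using sum by (simp add: monomials_deg_def exps_u)
  with exps_u show ?thesis by blast
qed

text \<open>Reduce every coordinate but the first modulo \<open>M\<close> and put the excess into the first one;
  it stays nonnegative once \<open>d \<ge> (s - 1) M\<close>.\<close>
lemma monomial_congruent_mod:
  fixes x :: "nat \<Rightarrow> int"
  assumes "s \<ge> 1" "M > 0" and sum: "(\<Sum>l<s. x l) = int d" and large: "int d \<ge> int (s - 1) * M"
  shows "\<exists>u\<in>monomials_deg s d. \<forall>l<s. M dvd exps u l - x l"
proof -
  define r where "r = (\<Sum>i\<in>{1..<s}. x i mod M)"
  define x' where "x' l = (if l = 0 then int d - r else if l < s then x l mod M else 0)" for l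
  have split: "(\<Sum>l<s. f l) = f 0 + (\<Sum>l\<in>{1..<s}. f l)" for f :: "nat \<Rightarrow> int"
    using assms(1) by (simp add: lessThan_atLeast0 sum.atLeast_Suc_lessThan)
  have "r \<le> (\<Sum>i\<in>{1..<s}. M)"
    unfolding r_def by (rule sum_mono) (use assms(2) in \<open>simp add: order.strict_implies_order\<close>)
  then have "r \<le> int d" using large by simp
  then have nonneg: "x' l \<ge> 0" for l using assms(2) by (simp add: x'_def)
  have "(\<Sum>l<s. x' l) = int d"
    unfolding split[of x'] by (simp add: x'_def r_def)
  moreover have "\<not> l < s \<Longrightarrow> x' l = 0" for l using assms(1) by (simp add: x'_def)
  ultimately obtain u where u: "u \<in> monomials_deg s d" "exps u = x'"
    using monomial_with_exps[of x' s d] nonneg by blast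
  have "M dvd x' l - x l" if "l < s" for l
  proof (cases "l = 0")
    case True
    have "x' l - x l = (\<Sum>i\<in>{1..<s}. x i - x i mod M)"
      using True split[of x] sum by (simp add: x'_def r_def sum_subtractf)
    also have "M dvd \<dots>" by (intro dvd_sum) (simp add: minus_mod_eq_mult_div)
    finally show ?thesis .
  next
    case False
    with that show ?thesis by (simp add: x'_def mod_eq_dvd_iff[symmetric])
  qed
  with u show ?thesis by blast
qed

lemma gen_ideal_0: "0 \<in> gen_ideal s G"
  unfolding gen_ideal_def by (intro CollectI exI[of _ 0]) auto

lemma gen_ideal_add:
  fixes p p' :: "'k::field mpoly"
  assumes "p \<in> gen_ideal s G" "p' \<in> gen_ideal s G"
  shows "p + p' \<in> gen_ideal s G"
proof -
  obtain n and q g :: "nat \<Rightarrow> 'k mpoly" where p: "\<forall>i<n. q i \<in> polys s \<and> g i \<in> G" "p = (\<Sum>i<n. q i * g i)"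
    using assms(1) unfolding gen_ideal_def by blast
  obtain n' and q' g' :: "nat \<Rightarrow> 'k mpoly" where p': "\<forall>i<n'. q' i \<in> polys s \<and> g' i \<in> G" "p' = (\<Sum>i<n'. q' i * g' i)"
    using assms(2) unfolding gen_ideal_def by blast
  define Q where "Q i = (if i < n then q i else q' (i - n))" for i
  define H where "H i = (if i < n then g i else g' (i - n))" for i
  have "p + p' = (\<Sum>i<n + n'. Q i * H i)"
    using p p' by (simp add: sum_lessThan_add_split Q_def H_def)
  moreover have "\<forall>i<n + n'. Q i \<in> polys s \<and> H i \<in> G"
    using p p' by (auto simp: Q_def H_def)
  ultimately show ?thesis unfolding gen_ideal_def by blast
qed

lemma gen_ideal_sum:
  assumes "finite A" "\<And>x. x \<in> A \<Longrightarrow> f x \<in> gen_ideal s G"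
  shows "sum f A \<in> gen_ideal s G"
  using assms by (induction A rule: finite_induct) (auto intro: gen_ideal_0 gen_ideal_add)

lemma gen_ideal_mult_generator:
  assumes "q \<in> polys s" "g \<in> G"
  shows "q * g \<in> gen_ideal s G"
  unfolding gen_ideal_def
  by (intro CollectI exI[of _ "1::nat"] exI[of _ "\<lambda>_. q"] exI[of _ "\<lambda>_. g"]) (use assms in auto)

section \<open>The Hilbert function of a lattice ideal\<close>

definition lin_indep_mod :: "'k::field mpoly set \<Rightarrow> 'k mpoly set \<Rightarrow> bool" where
  "lin_indep_mod I B \<longleftrightarrow> (\<forall>c. (\<Sum>b\<in>B. smult_mp (c b) b) \<in> I \<longrightarrow> (\<forall>b\<in>B. c b = 0))"

lemma hilbert_fun_eqI:
  assumes upper: "\<And>B. finite B \<Longrightarrow> B \<subseteq> polys_deg s d \<Longrightarrow> lin_indep_mod I B \<Longrightarrow> card B \<le> n"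
    and witness: "finite B0" "B0 \<subseteq> polys_deg s d" "lin_indep_mod I B0" "card B0 = n"
  shows "hilbert_fun s I d = n"
proof -
  let ?S = "{card B | B. finite B \<and> B \<subseteq> polys_deg s d \<and> lin_indep_mod I B}"
  have le: "y \<le> n" if "y \<in> ?S" for y using that upper by blast
  have "finite ?S" by (rule finite_subset[of _ "{..n}"]) (use le in auto)
  moreover have "n \<in> ?S" using witness by blast
  ultimately have "Max ?S = n" using le by (intro Max_eqI)
  then show ?thesis unfolding hilbert_fun_def lin_indep_mod_def .
qed

lemma lookup_pos_part: "Poly_Mapping.lookup (pos_part s a) = (\<lambda>j. if j < s then nat (a j) else 0)"
  unfolding pos_part_def
  by (rule lookup_Abs_poly_mapping, rule finite_subset[of _ "{..<s}"]) auto

lemma lookup_neg_part: "Poly_Mapping.lookup (neg_part s a) = (\<lambda>j. if j < s then nat (- a j) else 0)"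
  unfolding neg_part_def
  by (rule lookup_Abs_poly_mapping, rule finite_subset[of _ "{..<s}"]) auto

definition lattice_binomials :: "nat \<Rightarrow> (nat \<Rightarrow> int) set \<Rightarrow> 'k::field mpoly set" where
  "lattice_binomials s L = {monomial (pos_part s a) - monomial (neg_part s a) | a. a \<in> L}"

lemma lattice_ideal_eq_gen_ideal: "lattice_ideal s L = gen_ideal s (lattice_binomials s L)"
  unfolding lattice_ideal_def lattice_binomials_def ..

lemma binomial_in_lattice_ideal:
  assumes e: "e \<in> monomials_in s" and r: "r \<in> monomials_in s"
    and diff: "(\<lambda>j. exps e j - exps r j) \<in> L"
  shows "Poly_Mapping.single e c - Poly_Mapping.single r c \<in> (lattice_ideal s L :: 'k::field mpoly set)"
proof -
  define a where "a = (\<lambda>j. exps e j - exps r j)"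
  define g where "g = Abs_poly_mapping (\<lambda>j. min (Poly_Mapping.lookup e j) (Poly_Mapping.lookup r j))"
  have lookup_g: "Poly_Mapping.lookup g = (\<lambda>j. min (Poly_Mapping.lookup e j) (Poly_Mapping.lookup r j))"
    unfolding g_def
    by (rule lookup_Abs_poly_mapping, rule finite_subset[of _ "{j. Poly_Mapping.lookup e j \<noteq> 0}"]) auto
  have "Poly_Mapping.lookup e j = 0" "Poly_Mapping.lookup r j = 0" if "\<not> j < s" for j
    using e r that by (auto simp: monomials_in_def in_keys_iff)
  then have "e = g + pos_part s a" "r = g + neg_part s a"
    by (auto intro!: poly_mapping_eqI simp: lookup_add lookup_g lookup_pos_part lookup_neg_part a_def exps_def)
  then have eq: "Poly_Mapping.single e c - Poly_Mapping.single r c =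
      Poly_Mapping.single g c * (monomial (pos_part s a) - monomial (neg_part s a) :: 'k mpoly)"
    by (simp add: monomial_def right_diff_distrib mult_single)
  have "Poly_Mapping.keys g \<subseteq> Poly_Mapping.keys e" by (auto simp: in_keys_iff lookup_g)
  then have "Poly_Mapping.single g c \<in> (polys s :: 'k mpoly set)"
    using e by (auto simp: polys_def monomials_in_def)
  moreover have "(monomial (pos_part s a) - monomial (neg_part s a) :: 'k mpoly) \<in> lattice_binomials s L"
    using diff a_def by (auto simp: lattice_binomials_def)
  ultimately show ?thesis unfolding eq lattice_ideal_eq_gen_ideal by (rule gen_ideal_mult_generator)
qed

definition class_coeff_sum ::
    "nat \<Rightarrow> nat \<Rightarrow> ((nat \<Rightarrow>\<^sub>0 nat) \<Rightarrow> 'r) \<Rightarrow> 'r \<Rightarrow> 'k::field mpoly \<Rightarrow> 'k" where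
  "class_coeff_sum s d \<kappa> \<rho> p = (\<Sum>e\<in>{e\<in>monomials_deg s d. \<kappa> e = \<rho>}. Poly_Mapping.lookup p e)"

lemma class_coeff_sum_diff:
  "class_coeff_sum s d \<kappa> \<rho> (p - q) = class_coeff_sum s d \<kappa> \<rho> p - class_coeff_sum s d \<kappa> \<rho> q"
  by (simp add: class_coeff_sum_def lookup_minus sum_subtractf)

lemma class_coeff_sum_sum:
  "class_coeff_sum s d \<kappa> \<rho> (sum f A) = (\<Sum>x\<in>A. class_coeff_sum s d \<kappa> \<rho> (f x))"
  unfolding class_coeff_sum_def lookup_sum by (rule sum.swap)

lemma class_coeff_sum_smult:
  "class_coeff_sum s d \<kappa> \<rho> (smult_mp c p) = c * class_coeff_sum s d \<kappa> \<rho> p"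
  by (simp add: class_coeff_sum_def lookup_smult_mp sum_distrib_left)

lemma class_coeff_sum_mult_monomial:
  "class_coeff_sum s d \<kappa> \<rho> (q * monomial a) =
    (\<Sum>l\<in>{l. l + a \<in> monomials_deg s d \<and> \<kappa> (l + a) = \<rho>}. Poly_Mapping.lookup (q :: 'k::field mpoly) l)"
proof -
  let ?C = "{e\<in>monomials_deg s d. \<kappa> e = \<rho>}"
  have "finite ?C" using finite_monomials_deg by simp
  have lookup_shift: "Poly_Mapping.lookup (q * monomial a) e =
      (if e \<in> range (\<lambda>l. l + a) then Poly_Mapping.lookup q (e - a) else 0)" for e
  proof (cases "e \<in> range (\<lambda>l. l + a)")
    case False
    then have "\<forall>l. e \<noteq> l + a" by auto
    with False show ?thesis by (simp add: monomial_def lookup_mult_single_one)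
  next
    case True
    then obtain l where e: "e = l + a" by auto
    have "(\<lambda>l'. Poly_Mapping.lookup q l' when l + a = l' + a) = (\<lambda>l'. Poly_Mapping.lookup q l' when l' = l)"
      by (auto simp: fun_eq_iff when_def)
    then show ?thesis by (simp add: e monomial_def lookup_mult_single_one)
  qed
  have "class_coeff_sum s d \<kappa> \<rho> (q * monomial a) =
      (\<Sum>e\<in>?C \<inter> range (\<lambda>l. l + a). Poly_Mapping.lookup q (e - a))"
    unfolding class_coeff_sum_def lookup_shift using \<open>finite ?C\<close> by (simp add: sum.inter_restrict)
  also have "\<dots> = (\<Sum>l\<in>{l. l + a \<in> ?C}. Poly_Mapping.lookup q l)"
    by (rule sum.reindex_bij_witness[of _ "\<lambda>l. l + a" "\<lambda>e. e - a"]) auto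
  finally show ?thesis by simp
qed

text \<open>Multiplying by \<open>q\<close> shifts the coefficients of \<open>q\<close> by \<open>P\<close> and by \<open>N\<close>, where \<open>P - N = a\<close>;
  both shifts land in the same fibre since \<open>\<kappa>\<close> is constant on \<open>L\<close>-cosets.\<close>
lemma class_coeff_sum_mult_lattice_binomial:
  fixes L :: "(nat \<Rightarrow> int) set" and q :: "'k::field mpoly"
  assumes hom: "homogeneous_lattice s L"
    and supp: "\<forall>a\<in>L. \<forall>j. \<not> j < s \<longrightarrow> a j = 0"
    and \<kappa>: "\<forall>u\<in>monomials_deg s d. \<forall>v\<in>monomials_deg s d. (\<lambda>j. exps u j - exps v j) \<in> L \<longrightarrow> \<kappa> u = \<kappa> v"
    and a: "a \<in> L"
  shows "class_coeff_sum s d \<kappa> \<rho> (q * (monomial (pos_part s a) - monomial (neg_part s a))) = 0"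
proof -
  define P where "P = pos_part s a"
  define N where "N = neg_part s a"
  have keys_P: "Poly_Mapping.keys P \<subseteq> {..<s}"
    by (auto simp: P_def in_keys_iff lookup_pos_part split: if_splits)
  have keys_N: "Poly_Mapping.keys N \<subseteq> {..<s}"
    by (auto simp: N_def in_keys_iff lookup_neg_part split: if_splits)
  have "int (tdeg P) - int (tdeg N) = (\<Sum>j<s. int (nat (a j)) - int (nat (- a j)))"
    using tdeg_eq_sum_superset[of "{..<s}" P] tdeg_eq_sum_superset[of "{..<s}" N] keys_P keys_N
    by (simp add: P_def N_def lookup_pos_part lookup_neg_part sum_subtractf)
  also have "\<dots> = (\<Sum>j<s. a j)" by (rule sum.cong) auto
  also have "\<dots> = 0" using hom a by (auto simp: homogeneous_lattice_def)
  finally have same_tdeg: "tdeg P = tdeg N" by simp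
  have same_deg: "l + P \<in> monomials_deg s d \<longleftrightarrow> l + N \<in> monomials_deg s d" for l
    unfolding monomials_deg_def monomials_in_def mem_Collect_eq keys_add_nat tdeg_add same_tdeg
    using keys_P keys_N by blast
  have diff_a: "(\<lambda>j. exps (l + P) j - exps (l + N) j) = a" for l
  proof
    fix j show "exps (l + P) j - exps (l + N) j = a j"
      using supp a by (auto simp: exps_def lookup_add P_def N_def lookup_pos_part lookup_neg_part)
  qed
  have fibres: "{l. l + P \<in> monomials_deg s d \<and> \<kappa> (l + P) = \<rho>} =
      {l. l + N \<in> monomials_deg s d \<and> \<kappa> (l + N) = \<rho>}"
  proof -
    have "\<kappa> (l + P) = \<kappa> (l + N)" if "l + P \<in> monomials_deg s d" "l + N \<in> monomials_deg s d" for l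
      using \<kappa> that diff_a a by metis
    then show ?thesis using same_deg by auto
  qed
  show ?thesis
    by (simp only: P_def[symmetric] N_def[symmetric] right_diff_distrib class_coeff_sum_diff
        class_coeff_sum_mult_monomial fibres diff_self)
qed

lemma class_coeff_sum_lattice_ideal:
  fixes L :: "(nat \<Rightarrow> int) set"
  assumes hom: "homogeneous_lattice s L"
    and supp: "\<forall>a\<in>L. \<forall>j. \<not> j < s \<longrightarrow> a j = 0"
    and \<kappa>: "\<forall>u\<in>monomials_deg s d. \<forall>v\<in>monomials_deg s d. (\<lambda>j. exps u j - exps v j) \<in> L \<longrightarrow> \<kappa> u = \<kappa> v"
    and p: "p \<in> (lattice_ideal s L :: 'k::field mpoly set)"
  shows "class_coeff_sum s d \<kappa> \<rho> p = 0"
proof -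
  obtain n and q g :: "nat \<Rightarrow> 'k mpoly" where
    gens: "\<forall>i<n. q i \<in> polys s \<and> g i \<in> lattice_binomials s L" "p = (\<Sum>i<n. q i * g i)"
    using p unfolding lattice_ideal_eq_gen_ideal gen_ideal_def by blast
  then have "class_coeff_sum s d \<kappa> \<rho> p = (\<Sum>i<n. class_coeff_sum s d \<kappa> \<rho> (q i * g i))"
    by (simp only: class_coeff_sum_sum)
  also have "\<dots> = 0"
  proof (rule sum.neutral, rule ballI)
    fix i assume "i \<in> {..<n}"
    with gens(1) obtain a where "a \<in> L" "g i = monomial (pos_part s a) - monomial (neg_part s a)"
      by (auto simp: lattice_binomials_def)
    then show "class_coeff_sum s d \<kappa> \<rho> (q i * g i) = 0"
      using class_coeff_sum_mult_lattice_binomial[OF hom supp \<kappa>] by simp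
  qed
  finally show ?thesis .
qed

text \<open>Conversely, a degree-\<open>d\<close> polynomial whose coefficient sums vanish on every fibre is a
  combination of binomials \<open>t\<^sup>e - t\<^sup>r\<close>, \<open>r\<close> a fixed representative of the fibre of \<open>e\<close>.\<close>
lemma in_lattice_ideal_if_class_coeff_sums_0:
  fixes L :: "(nat \<Rightarrow> int) set" and p :: "'k::field mpoly"
  assumes \<kappa>: "\<forall>u\<in>monomials_deg s d. \<forall>v\<in>monomials_deg s d. (\<lambda>j. exps u j - exps v j) \<in> L \<longleftrightarrow> \<kappa> u = \<kappa> v"
    and keys_p: "Poly_Mapping.keys p \<subseteq> monomials_deg s d"
    and sums: "\<forall>\<rho>\<in>\<kappa> ` monomials_deg s d. class_coeff_sum s d \<kappa> \<rho> p = 0"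
  shows "p \<in> lattice_ideal s L"
proof -
  let ?M = "monomials_deg s d"
  define rep where "rep \<rho> = (SOME e. e \<in> ?M \<and> \<kappa> e = \<rho>)" for \<rho>
  have rep: "rep (\<kappa> e) \<in> ?M \<and> \<kappa> (rep (\<kappa> e)) = \<kappa> e" if "e \<in> ?M" for e
    unfolding rep_def by (rule someI_ex) (use that in blast)
  have reps_cancel: "(\<Sum>e\<in>?M. Poly_Mapping.single (rep (\<kappa> e)) (Poly_Mapping.lookup p e)) = 0"
  proof -
    have "(\<Sum>e\<in>?M. Poly_Mapping.single (rep (\<kappa> e)) (Poly_Mapping.lookup p e)) =
      (\<Sum>\<rho>\<in>\<kappa> ` ?M. \<Sum>e\<in>{x \<in> ?M. \<kappa> x = \<rho>}. Poly_Mapping.single (rep (\<kappa> e)) (Poly_Mapping.lookup p e))"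
      by (rule sum.group[symmetric]) (auto simp: finite_monomials_deg)
    also have "\<dots> =
      (\<Sum>\<rho>\<in>\<kappa> ` ?M. \<Sum>e\<in>{x \<in> ?M. \<kappa> x = \<rho>}. Poly_Mapping.single (rep \<rho>) (Poly_Mapping.lookup p e))"
      by (intro sum.cong) auto
    also have "\<dots> = (\<Sum>\<rho>\<in>\<kappa> ` ?M. Poly_Mapping.single (rep \<rho>) (class_coeff_sum s d \<kappa> \<rho> p))"
      by (simp add: class_coeff_sum_def single_sum)
    also have "\<dots> = 0" using sums by (intro sum.neutral) simp
    finally show ?thesis .
  qed
  have "p = (\<Sum>e\<in>?M. Poly_Mapping.single e (Poly_Mapping.lookup p e)
      - Poly_Mapping.single (rep (\<kappa> e)) (Poly_Mapping.lookup p e))"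
    unfolding sum_subtractf reps_cancel
    using poly_mapping_eq_sum_single[OF finite_monomials_deg keys_p] by simp
  also have "\<dots> \<in> lattice_ideal s L"
    unfolding lattice_ideal_eq_gen_ideal
  proof (rule gen_ideal_sum[OF finite_monomials_deg])
    fix e assume e: "e \<in> ?M"
    have diff: "(\<lambda>j. exps e j - exps (rep (\<kappa> e)) j) \<in> L"
      using \<kappa>[rule_format, OF e conjunct1[OF rep[OF e]]] conjunct2[OF rep[OF e]] by simp
    have "e \<in> monomials_in s" "rep (\<kappa> e) \<in> monomials_in s"
      using e rep[OF e] by (auto simp: monomials_deg_def)
    from binomial_in_lattice_ideal[OF this diff]
    show "Poly_Mapping.single e (Poly_Mapping.lookup p e)
        - Poly_Mapping.single (rep (\<kappa> e)) (Poly_Mapping.lookup p e)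
        \<in> gen_ideal s (lattice_binomials s L)"
      unfolding lattice_ideal_eq_gen_ideal .
  qed
  finally show ?thesis .
qed

lemma keys_sum_smult_mp_subset:
  assumes "finite B" "B \<subseteq> polys_deg s d"
  shows "Poly_Mapping.keys (\<Sum>b\<in>B. smult_mp (c b) b) \<subseteq> monomials_deg s d"
proof
  fix e assume "e \<in> Poly_Mapping.keys (\<Sum>b\<in>B. smult_mp (c b) b)"
  then have "(\<Sum>b\<in>B. c b * Poly_Mapping.lookup b e) \<noteq> 0"
    by (simp add: in_keys_iff lookup_sum lookup_smult_mp)
  then obtain b where "b \<in> B" "Poly_Mapping.lookup b e \<noteq> 0"
    by (metis (no_types, lifting) mult_zero_right sum.neutral)
  then have "e \<in> Poly_Mapping.keys b" "b \<in> polys_deg s d"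
    using assms by (auto simp: in_keys_iff)
  then show "e \<in> monomials_deg s d" by (auto simp: polys_deg_def monomials_deg_def)
qed

lemma card_le_card_classes_if_lin_indep_mod:
  fixes L :: "(nat \<Rightarrow> int) set" and B :: "'k::field mpoly set"
  assumes \<kappa>: "\<forall>u\<in>monomials_deg s d. \<forall>v\<in>monomials_deg s d. (\<lambda>j. exps u j - exps v j) \<in> L \<longleftrightarrow> \<kappa> u = \<kappa> v"
    and B: "finite B" "B \<subseteq> polys_deg s d" "lin_indep_mod (lattice_ideal s L) B"
  shows "card B \<le> card (\<kappa> ` monomials_deg s d)"
proof (rule ccontr)
  let ?R = "\<kappa> ` monomials_deg s d"
  assume "\<not> card B \<le> card ?R"
  then have "card B > card ?R" by simp
  from homogeneous_system_nontrivial_solution[OF _ B(1) this, of "\<lambda>b \<rho>. class_coeff_sum s d \<kappa> \<rho> b"]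
  obtain c where c: "\<forall>\<rho>\<in>?R. (\<Sum>b\<in>B. c b * class_coeff_sum s d \<kappa> \<rho> b) = 0" "\<exists>b\<in>B. c b \<noteq> 0"
    using finite_monomials_deg by blast
  have "(\<Sum>b\<in>B. smult_mp (c b) b) \<in> lattice_ideal s L"
  proof (rule in_lattice_ideal_if_class_coeff_sums_0[OF \<kappa>])
    show "Poly_Mapping.keys (\<Sum>b\<in>B. smult_mp (c b) b) \<subseteq> monomials_deg s d"
      by (rule keys_sum_smult_mp_subset[OF B(1,2)])
    show "\<forall>\<rho>\<in>?R. class_coeff_sum s d \<kappa> \<rho> (\<Sum>b\<in>B. smult_mp (c b) b) = 0"
      using c(1) by (simp add: class_coeff_sum_sum class_coeff_sum_smult)
  qed
  with B(3) c(2) show False by (auto simp: lin_indep_mod_def)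
qed

lemma lin_indep_mod_class_representatives:
  fixes L :: "(nat \<Rightarrow> int) set"
  assumes hom: "homogeneous_lattice s L"
    and supp: "\<forall>a\<in>L. \<forall>j. \<not> j < s \<longrightarrow> a j = 0"
    and \<kappa>: "\<forall>u\<in>monomials_deg s d. \<forall>v\<in>monomials_deg s d. (\<lambda>j. exps u j - exps v j) \<in> L \<longrightarrow> \<kappa> u = \<kappa> v"
  obtains B :: "'k::field mpoly set" where "finite B" "B \<subseteq> polys_deg s d"
    "lin_indep_mod (lattice_ideal s L) B" "card B = card (\<kappa> ` monomials_deg s d)"
proof
  let ?M = "monomials_deg s d"
  let ?R = "\<kappa> ` ?M"
  have "finite ?R" using finite_monomials_deg by simp
  define rep where "rep \<rho> = (SOME e. e \<in> ?M \<and> \<kappa> e = \<rho>)" for \<rho>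
  have rep: "rep \<rho> \<in> ?M \<and> \<kappa> (rep \<rho>) = \<rho>" if "\<rho> \<in> ?R" for \<rho>
    unfolding rep_def by (rule someI_ex) (use that in blast)
  define mon where "mon \<rho> = (Poly_Mapping.single (rep \<rho>) 1 :: 'k mpoly)" for \<rho>
  have inj: "inj_on mon ?R"
  proof (rule inj_onI)
    fix x y assume "x \<in> ?R" "y \<in> ?R" "mon x = mon y"
    then have "rep x = rep y" unfolding mon_def by (metis lookup_single_eq lookup_single_not_eq one_neq_zero)
    then show "x = y" using rep \<open>x \<in> ?R\<close> \<open>y \<in> ?R\<close> by metis
  qed
  have class_coeff_sum_mon: "class_coeff_sum s d \<kappa> \<rho> (mon \<rho>') = (if \<rho>' = \<rho> then 1 else 0)"
    if "\<rho>' \<in> ?R" for \<rho> \<rho>'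
  proof -
    have "class_coeff_sum s d \<kappa> \<rho> (mon \<rho>') = (\<Sum>e\<in>{e\<in>?M. \<kappa> e = \<rho>}. if e = rep \<rho>' then 1 else 0)"
      unfolding class_coeff_sum_def mon_def by (rule sum.cong) (auto simp: lookup_single when_def)
    also have "\<dots> = (if \<rho>' = \<rho> then 1 else 0)"
      using finite_monomials_deg[of s d] rep[OF that] by (auto simp: sum.delta')
    finally show ?thesis .
  qed
  show "finite (mon ` ?R)" using \<open>finite ?R\<close> by simp
  show "mon ` ?R \<subseteq> polys_deg s d"
    using rep by (auto simp: mon_def polys_deg_def monomials_deg_def)
  show "card (mon ` ?R) = card ?R" by (rule card_image[OF inj])
  show "lin_indep_mod (lattice_ideal s L) (mon ` ?R)"
    unfolding lin_indep_mod_def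
  proof (intro allI impI ballI)
    fix c b assume in_I: "(\<Sum>b\<in>mon ` ?R. smult_mp (c b) b) \<in> lattice_ideal s L" and "b \<in> mon ` ?R"
    then obtain \<rho> where \<rho>: "\<rho> \<in> ?R" "b = mon \<rho>" by blast
    have "0 = class_coeff_sum s d \<kappa> \<rho> (\<Sum>b\<in>mon ` ?R. smult_mp (c b) b)"
      using class_coeff_sum_lattice_ideal[OF hom supp \<kappa> in_I] by simp
    also have "\<dots> = (\<Sum>\<rho>'\<in>?R. c (mon \<rho>') * class_coeff_sum s d \<kappa> \<rho> (mon \<rho>'))"
      unfolding class_coeff_sum_sum class_coeff_sum_smult by (rule sum.reindex[OF inj, unfolded comp_def])
    also have "\<dots> = (\<Sum>\<rho>'\<in>?R. if \<rho>' = \<rho> then c (mon \<rho>') else 0)"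
      by (rule sum.cong) (auto simp: class_coeff_sum_mon)
    also have "\<dots> = c b" using \<open>finite ?R\<close> \<rho> by simp
    finally show "c b = 0" by simp
  qed
qed

text \<open>The classes of monomials modulo \<open>L\<close> are given as the fibres of \<open>\<kappa>\<close>; independence modulo
  the ideal is detected by the functionals \<open>class_coeff_sum\<close>, which vanish on the ideal and
  separate the class representatives.\<close>
lemma hilbert_fun_lattice_ideal:
  fixes L :: "(nat \<Rightarrow> int) set"
  assumes hom: "homogeneous_lattice s L"
    and supp: "\<forall>a\<in>L. \<forall>j. \<not> j < s \<longrightarrow> a j = 0"
    and \<kappa>: "\<forall>u\<in>monomials_deg s d. \<forall>v\<in>monomials_deg s d. (\<lambda>j. exps u j - exps v j) \<in> L \<longleftrightarrow> \<kappa> u = \<kappa> v"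
  shows "hilbert_fun s (lattice_ideal s L :: 'k::field mpoly set) d = card (\<kappa> ` monomials_deg s d)"
proof -
  have "\<forall>u\<in>monomials_deg s d. \<forall>v\<in>monomials_deg s d. (\<lambda>j. exps u j - exps v j) \<in> L \<longrightarrow> \<kappa> u = \<kappa> v"
    using \<kappa> by blast
  from lin_indep_mod_class_representatives[OF hom supp this]
  obtain B0 :: "'k mpoly set" where "finite B0" "B0 \<subseteq> polys_deg s d"
    "lin_indep_mod (lattice_ideal s L) B0" "card B0 = card (\<kappa> ` monomials_deg s d)" .
  with card_le_card_classes_if_lin_indep_mod[OF \<kappa>] show ?thesis by (rule hilbert_fun_eqI)
qed

section \<open>Eventually constant Hilbert functions\<close>

lemma hilbert_poly_eventually_const:
  assumes "eventually (\<lambda>d. hilbert_fun s I d = N) sequentially"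
  shows "hilbert_poly s I = [:of_nat N:]"
proof -
  have const: "eventually (\<lambda>d. of_nat (hilbert_fun s I d) = poly [:of_nat N:] (of_nat d :: rat)) sequentially"
    using assms by eventually_elim simp
  have "h = [:of_nat N:]"
    if h: "eventually (\<lambda>d. of_nat (hilbert_fun s I d) = poly h (of_nat d :: rat)) sequentially" for h
  proof (rule ccontr)
    assume "h \<noteq> [:of_nat N:]"
    then have "finite {x. poly (h - [:of_nat N:]) x = (0::rat)}"
      by (intro poly_roots_finite) simp
    moreover obtain d0 where "\<forall>d\<ge>d0. poly h (of_nat d) = poly [:of_nat N:] (of_nat d :: rat)"
      using eventually_conj[OF h const] unfolding eventually_sequentially by (metis (no_types, lifting))
    then have "of_nat ` {d0..} \<subseteq> {x. poly (h - [:of_nat N:]) x = (0::rat)}" by auto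
    ultimately have "finite (of_nat ` {d0..} :: rat set)" by (rule finite_subset[rotated])
    then have "finite {d0..}" by (rule finite_imageD) (simp add: inj_on_def)
    then show False using infinite_Ici by blast
  qed
  with const show ?thesis unfolding hilbert_poly_def by (rule the_equality)
qed

lemma deg_quot_eventually_const:
  assumes "eventually (\<lambda>d. hilbert_fun s I d = N) sequentially" "N > 0"
  shows "deg_quot s I = of_nat N"
  using assms by (simp add: deg_quot_def hilbert_poly_eventually_const)

section \<open>Lattices and Smith normal form\<close>

definition int_lin_indep :: "(nat \<Rightarrow> int) set \<Rightarrow> bool" where
  "int_lin_indep B \<longleftrightarrow> (\<forall>c. (\<forall>j. (\<Sum>b\<in>B. c b * b j) = 0) \<longrightarrow> (\<forall>b\<in>B. c b = 0))"

lemma lattice_rank_le: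
  assumes "\<And>B. finite B \<Longrightarrow> B \<subseteq> L \<Longrightarrow> int_lin_indep B \<Longrightarrow> card B \<le> k"
  shows "lattice_rank L \<le> k"
proof -
  let ?S = "{card B | B. finite B \<and> B \<subseteq> L \<and> int_lin_indep B}"
  have le: "y \<le> k" if "y \<in> ?S" for y using that assms by blast
  have "finite ?S" by (rule finite_subset[of _ "{..k}"]) (use le in auto)
  moreover have "card {} \<in> ?S"
    unfolding mem_Collect_eq by (intro exI[of _ "{}"]) (simp add: int_lin_indep_def)
  ultimately have "Max ?S \<le> k" using le by (subst Max_le_iff) auto
  then show ?thesis unfolding lattice_rank_def int_lin_indep_def .
qed

definition vec_mat :: "nat \<Rightarrow> (nat \<Rightarrow> int) \<Rightarrow> (nat \<Rightarrow> nat \<Rightarrow> int) \<Rightarrow> nat \<Rightarrow> int" where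
  "vec_mat n x X = (\<lambda>k. \<Sum>j<n. x j * X j k)"

lemma vec_mat_mat_mul: "vec_mat n (vec_mat m x X) Y k = vec_mat m x (mat_mul n X Y) k"
proof -
  have "vec_mat n (vec_mat m x X) Y k = (\<Sum>j<n. \<Sum>i<m. x i * X i j * Y j k)"
    by (simp add: vec_mat_def sum_distrib_right)
  also have "\<dots> = (\<Sum>i<m. \<Sum>j<n. x i * X i j * Y j k)" by (rule sum.swap)
  also have "\<dots> = vec_mat m x (mat_mul n X Y) k"
    by (simp add: vec_mat_def mat_mul_def sum_distrib_left mult.assoc)
  finally show ?thesis .
qed

lemma vec_mat_inverse:
  assumes "\<forall>i<n. \<forall>j<n. mat_mul n X Y i j = (if i = j then 1 else 0)" "l < n"
  shows "vec_mat n (vec_mat n x X) Y l = x l"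
proof -
  have "vec_mat n (vec_mat n x X) Y l = vec_mat n x (mat_mul n X Y) l" by (rule vec_mat_mat_mul)
  also have "\<dots> = (\<Sum>j<n. if j = l then x j else 0)"
    unfolding vec_mat_def by (rule sum.cong) (use assms in auto)
  also have "\<dots> = x l" using assms(2) by simp
  finally show ?thesis .
qed

lemma vec_mat_cong: "(\<And>j. j < n \<Longrightarrow> x j = y j) \<Longrightarrow> vec_mat n x X k = vec_mat n y X k"
  unfolding vec_mat_def by (rule sum.cong) auto

lemma vec_mat_cong_mat: "(\<And>j. j < n \<Longrightarrow> X j k = Y j k) \<Longrightarrow> vec_mat n x X k = vec_mat n x Y k"
  unfolding vec_mat_def by (rule sum.cong) auto

lemma vec_mat_diff: "vec_mat n (\<lambda>j. x j - y j) X k = vec_mat n x X k - vec_mat n y X k"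
  by (simp add: vec_mat_def left_diff_distrib sum_subtractf)

locale smith_lattice =
  fixes s m :: nat and A D P P' Q Q' :: "nat \<Rightarrow> nat \<Rightarrow> int"
  assumes s_ge_2: "s \<ge> 2"
    and P_left_inverse: "\<forall>i<m. \<forall>j<m. mat_mul m P' P i j = (if i = j then 1 else 0)"
    and Q_right_inverse: "\<forall>i<s. \<forall>j<s. mat_mul s Q Q' i j = (if i = j then 1 else 0)"
    and Q_left_inverse: "\<forall>i<s. \<forall>j<s. mat_mul s Q' Q i j = (if i = j then 1 else 0)"
    and D_eq: "\<forall>i<m. \<forall>j<s. D i j = mat_mul s (mat_mul m P A) Q i j"
    and D_diagonal: "\<forall>i<m. \<forall>j<s. i \<noteq> j \<longrightarrow> D i j = 0"
    and D_nonneg: "\<forall>i<min m s. D i i \<ge> 0"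
    and D_dvd: "\<forall>i. i + 1 < min m s \<longrightarrow> D i i dvd D (i + 1) (i + 1)"
    and homogeneous: "homogeneous_lattice s (row_lattice m s A)"
    and rank: "lattice_rank (row_lattice m s A) = s - 1"
begin

abbreviation "L \<equiv> row_lattice m s A"

definition inv_factor :: "nat \<Rightarrow> int" where
  "inv_factor k = (if k < m then D k k else 0)"

lemma vec_mat_D: "k < s \<Longrightarrow> vec_mat m y D k = y k * inv_factor k"
proof -
  assume k: "k < s"
  have "vec_mat m y D k = (\<Sum>i<m. if i = k then y i * D i i else 0)"
    unfolding vec_mat_def by (rule sum.cong) (use D_diagonal k in auto)
  then show ?thesis by (simp add: inv_factor_def)
qed

lemma mem_L_iff: "v \<in> L \<longleftrightarrow> (\<forall>j. \<not> j < s \<longrightarrow> v j = 0) \<and> (\<exists>c. \<forall>j<s. v j = vec_mat m c A j)"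
  unfolding row_lattice_def vec_mat_def by (auto; metis)

lemma L_supp: "a \<in> L \<Longrightarrow> \<not> j < s \<Longrightarrow> a j = 0"
  by (auto simp: mem_L_iff)

text \<open>In the coordinates \<open>x \<mapsto> x Q\<close>, the lattice is the product of the ideals \<open>d\<^sub>k \<int>\<close>.\<close>
lemma mem_L_iff_dvd:
  assumes v_supp: "\<forall>j. \<not> j < s \<longrightarrow> v j = 0"
  shows "v \<in> L \<longleftrightarrow> (\<forall>k<s. inv_factor k dvd vec_mat s v Q k)"
proof
  assume "v \<in> L"
  then obtain c where c: "\<forall>j<s. v j = vec_mat m c A j" by (auto simp: mem_L_iff)
  define y where "y = vec_mat m c P'"
  have "vec_mat s v Q k = y k * inv_factor k" if k: "k < s" for k
  proof -
    have "vec_mat s v Q k = vec_mat s (vec_mat m (vec_mat m y P) A) Q k"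
      by (rule vec_mat_cong) (use c vec_mat_inverse[OF P_left_inverse] in \<open>auto simp: y_def intro: vec_mat_cong\<close>)
    also have "\<dots> = vec_mat s (vec_mat m y (mat_mul m P A)) Q k"
      by (rule vec_mat_cong) (simp add: vec_mat_mat_mul)
    also have "\<dots> = vec_mat m y (mat_mul s (mat_mul m P A) Q) k"
      by (rule vec_mat_mat_mul)
    also have "\<dots> = vec_mat m y D k" by (rule vec_mat_cong_mat) (use D_eq k in auto)
    finally show ?thesis using vec_mat_D[OF k] by simp
  qed
  then show "\<forall>k<s. inv_factor k dvd vec_mat s v Q k" by simp
next
  assume dvd: "\<forall>k<s. inv_factor k dvd vec_mat s v Q k"
  define z where "z k = (if inv_factor k = 0 then 0 else vec_mat s v Q k div inv_factor k)" for k
  have vQ: "vec_mat s v Q k = vec_mat m z (mat_mul s (mat_mul m P A) Q) k" if k: "k < s" for k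
  proof -
    have "vec_mat s v Q k = vec_mat m z D k" using dvd k by (auto simp: z_def vec_mat_D)
    also have "\<dots> = vec_mat m z (mat_mul s (mat_mul m P A) Q) k"
      by (rule vec_mat_cong_mat) (use D_eq k in auto)
    finally show ?thesis .
  qed
  have "v j = vec_mat m (vec_mat m z P) A j" if j: "j < s" for j
  proof -
    have "v j = vec_mat s (vec_mat s v Q) Q' j" by (rule vec_mat_inverse[OF Q_right_inverse j, symmetric])
    also have "\<dots> = vec_mat s (vec_mat s (vec_mat m z (mat_mul m P A)) Q) Q' j"
      by (rule vec_mat_cong) (simp add: vQ vec_mat_mat_mul)
    also have "\<dots> = vec_mat m z (mat_mul m P A) j" by (rule vec_mat_inverse[OF Q_right_inverse j])
    also have "\<dots> = vec_mat m (vec_mat m z P) A j" by (rule vec_mat_mat_mul[symmetric])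
    finally show ?thesis .
  qed
  then show "v \<in> L" using v_supp by (auto simp: mem_L_iff)
qed

text \<open>The coordinate sum in the new coordinates: \<open>\<Sum>\<^sub>l v\<^sub>l = \<Sum>\<^sub>k (v Q)\<^sub>k w\<^sub>k\<close> with \<open>w = Q\<^sup>-\<^sup>1 \<one>\<close>.\<close>
definition sum_weight :: "nat \<Rightarrow> int" where
  "sum_weight k = (\<Sum>l<s. Q' k l)"

lemma sum_eq_sum_weight: "(\<Sum>l<s. v l) = (\<Sum>k<s. vec_mat s v Q k * sum_weight k)"
proof -
  have "(\<Sum>l<s. v l) = (\<Sum>l<s. vec_mat s (vec_mat s v Q) Q' l)"
    by (rule sum.cong) (use vec_mat_inverse[OF Q_right_inverse] in auto)
  also have "\<dots> = (\<Sum>l<s. \<Sum>k<s. vec_mat s v Q k * Q' k l)" by (simp add: vec_mat_def)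
  also have "\<dots> = (\<Sum>k<s. \<Sum>l<s. vec_mat s v Q k * Q' k l)" by (rule sum.swap)
  also have "\<dots> = (\<Sum>k<s. vec_mat s v Q k * sum_weight k)"
    by (simp add: sum_weight_def sum_distrib_left)
  finally show ?thesis .
qed

lemma inv_factor_nonneg: "k < s \<Longrightarrow> inv_factor k \<ge> 0"
  using D_nonneg by (auto simp: inv_factor_def)

lemma inv_factor_eq_0_mono: "inv_factor i = 0 \<Longrightarrow> i \<le> j \<Longrightarrow> j < s \<Longrightarrow> inv_factor j = 0"
proof (induction j)
  case (Suc j)
  show ?case
  proof (cases "i \<le> j")
    case True
    with Suc have "inv_factor j = 0" by simp
    with Suc.prems D_dvd show ?thesis by (auto simp: inv_factor_def)
  next
    case False
    with Suc show ?thesis by (simp add: le_Suc_eq)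
  qed
qed simp

text \<open>Homogeneity: the lattice vector \<open>d\<^sub>k (row k of Q')\<close> has coordinate sum \<open>d\<^sub>k w\<^sub>k = 0\<close>.\<close>
lemma sum_weight_eq_0:
  assumes k: "k < s" "inv_factor k \<noteq> 0"
  shows "sum_weight k = 0"
proof -
  define x where "x l = (if l < s then inv_factor k * Q' k l else 0)" for l
  have xQ: "vec_mat s x Q k' = (if k' = k then inv_factor k else 0)" if "k' < s" for k'
  proof -
    have "vec_mat s x Q k' = inv_factor k * mat_mul s Q' Q k k'"
      by (simp add: vec_mat_def x_def mat_mul_def sum_distrib_left mult.assoc)
    then show ?thesis using Q_left_inverse k that by auto
  qed
  then have "x \<in> L" by (subst mem_L_iff_dvd) (auto simp: x_def)
  then have "0 = (\<Sum>l<s. x l)" using homogeneous by (simp add: homogeneous_lattice_def)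
  also have "\<dots> = (\<Sum>k'<s. vec_mat s x Q k' * sum_weight k')" by (rule sum_eq_sum_weight)
  also have "\<dots> = (\<Sum>k'<s. if k' = k then inv_factor k * sum_weight k else 0)"
    by (rule sum.cong) (auto simp: xQ)
  also have "\<dots> = inv_factor k * sum_weight k" using k by simp
  finally show ?thesis using k by simp
qed

lemma sum_weight_nonzero: "\<exists>k<s. sum_weight k \<noteq> 0"
proof (rule ccontr)
  assume "\<not> (\<exists>k<s. sum_weight k \<noteq> 0)"
  then have "(\<Sum>k<s. vec_mat s (\<lambda>l. if l = 0 then 1 else 0) Q k * sum_weight k) = 0" by simp
  moreover have "(\<Sum>l<s. if l = 0 then 1 else 0 :: int) = 1" using s_ge_2 by simp
  ultimately show False using sum_eq_sum_weight[of "\<lambda>l. if l = 0 then 1 else 0"] by simp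
qed

lemma inv_factor_last: "inv_factor (s - 1) = 0"
  using sum_weight_nonzero sum_weight_eq_0 inv_factor_eq_0_mono by fastforce

text \<open>If \<open>d\<^sub>k = \<dots> = d\<^sub>s\<^sub>-\<^sub>1 = 0\<close>, every lattice vector has \<open>(v Q)\<^sub>j = 0\<close> for \<open>j \<ge> k\<close>, so at most \<open>k\<close>
  lattice vectors are independent.\<close>
lemma rank_le_if_inv_factors_0:
  assumes zero: "\<forall>j. k \<le> j \<and> j < s \<longrightarrow> inv_factor j = 0"
  shows "lattice_rank L \<le> k"
proof (rule lattice_rank_le, rule ccontr)
  fix B assume B: "finite B" "B \<subseteq> L" "int_lin_indep B" and "\<not> card B \<le> k"
  then have "card B > card {..<k}" by simp
  from homogeneous_system_nontrivial_solution[OF finite_lessThan B(1) this, of "\<lambda>b j. vec_mat s b Q j"]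
  obtain c where c: "\<forall>j<k. (\<Sum>b\<in>B. c b * vec_mat s b Q j) = 0" "\<exists>b\<in>B. c b \<noteq> 0" by auto
  have high: "vec_mat s b Q j = 0" if "b \<in> B" "k \<le> j" "j < s" for b j
  proof -
    have "b \<in> L" using that B(2) by auto
    then have "inv_factor j dvd vec_mat s b Q j" using mem_L_iff_dvd L_supp that(3) by blast
    then show ?thesis using zero that by simp
  qed
  have all: "(\<Sum>b\<in>B. c b * vec_mat s b Q j) = 0" if "j < s" for j
    using c(1) high that by (cases "j < k") (auto intro: sum.neutral)
  have "(\<Sum>b\<in>B. c b * b j) = 0" for j
  proof (cases "j < s")
    case True
    have "(\<Sum>b\<in>B. c b * b j) = (\<Sum>b\<in>B. c b * (\<Sum>k<s. vec_mat s b Q k * Q' k j))"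
      by (rule sum.cong) (use vec_mat_inverse[OF Q_right_inverse True] in \<open>auto simp: vec_mat_def\<close>)
    also have "\<dots> = (\<Sum>b\<in>B. \<Sum>k<s. c b * vec_mat s b Q k * Q' k j)"
      by (simp add: sum_distrib_left mult.assoc)
    also have "\<dots> = (\<Sum>k<s. (\<Sum>b\<in>B. c b * vec_mat s b Q k) * Q' k j)"
      by (subst sum.swap) (simp add: sum_distrib_right)
    also have "\<dots> = 0" using all by simp
    finally show ?thesis .
  next
    case False
    then show ?thesis using B(2) L_supp by (intro sum.neutral) auto
  qed
  then show False using B(3) c(2) by (auto simp: int_lin_indep_def)
qed

lemma inv_factor_pos: "k < s - 1 \<Longrightarrow> inv_factor k > 0"
proof (rule ccontr)
  assume k: "k < s - 1" "\<not> inv_factor k > 0"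
  then have "inv_factor k = 0" using inv_factor_nonneg[of k] by simp
  then have "lattice_rank L \<le> k" using inv_factor_eq_0_mono by (blast intro: rank_le_if_inv_factors_0)
  then show False using rank k by simp
qed

lemma sum_eq_last_coord: "(\<Sum>l<s. v l) = vec_mat s v Q (s - 1) * sum_weight (s - 1)"
proof -
  have "sum_weight k = 0" if "k < s - 1" for k
    using that sum_weight_eq_0[of k] inv_factor_pos[of k] by simp
  then have "(\<Sum>k<s. vec_mat s v Q k * sum_weight k) = (\<Sum>k\<in>{s - 1}. vec_mat s v Q k * sum_weight k)"
    by (intro sum.mono_neutral_right) (use s_ge_2 in auto)
  then show ?thesis using sum_eq_sum_weight[of v] by simp
qed

lemma sum_weight_last_square: "sum_weight (s - 1) * sum_weight (s - 1) = 1"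
proof -
  have "sum_weight (s - 1) * vec_mat s (\<lambda>l. if l = 0 then 1 else 0) Q (s - 1) = 1"
    using sum_eq_last_coord[of "\<lambda>l. if l = 0 then 1 else 0"] s_ge_2 by (simp add: mult.commute)
  then have "sum_weight (s - 1) = 1 \<or> sum_weight (s - 1) = -1" by (rule pos_zmult_eq_1_iff_lemma)
  then show ?thesis by auto
qed


definition class_count :: int where
  "class_count = (\<Prod>k<s - 1. inv_factor k)"

definition residues :: "(nat \<Rightarrow>\<^sub>0 nat) \<Rightarrow> nat \<Rightarrow> int" where
  "residues u = restrict (\<lambda>k. vec_mat s (exps u) Q k mod inv_factor k) {..<s - 1}"

lemma class_count_pos: "class_count > 0"
  unfolding class_count_def by (rule prod_pos) (use inv_factor_pos in auto)

text \<open>For monomials of equal degree the last transformed coordinate of the difference is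
  \<open>\<plusminus>\<close> its coordinate sum, i.e. \<open>0\<close>, so only the first \<open>s - 1\<close> congruences remain.\<close>
lemma exps_diff_mem_L_iff:
  assumes u: "u \<in> monomials_deg s d" and v: "v \<in> monomials_deg s d"
  shows "(\<lambda>j. exps u j - exps v j) \<in> L \<longleftrightarrow> residues u = residues v"
proof -
  let ?x = "\<lambda>j. exps u j - exps v j"
  have x_supp: "\<forall>j. \<not> j < s \<longrightarrow> ?x j = 0" using exps_eq_0[OF u] exps_eq_0[OF v] by simp
  have "(\<Sum>j<s. ?x j) = 0" using sum_exps[OF u] sum_exps[OF v] by (simp add: sum_subtractf)
  then have last: "vec_mat s ?x Q (s - 1) = 0"
    using sum_eq_last_coord[of ?x] sum_weight_last_square by auto
  have "?x \<in> L \<longleftrightarrow> (\<forall>k<s. inv_factor k dvd vec_mat s ?x Q k)" by (rule mem_L_iff_dvd[OF x_supp])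
  also have "\<dots> \<longleftrightarrow> (\<forall>k<s - 1. inv_factor k dvd vec_mat s ?x Q k)"
  proof
    assume low: "\<forall>k<s - 1. inv_factor k dvd vec_mat s ?x Q k"
    show "\<forall>k<s. inv_factor k dvd vec_mat s ?x Q k"
    proof (intro allI impI)
      fix k assume "k < s"
      then consider "k < s - 1" | "k = s - 1" by linarith
      then show "inv_factor k dvd vec_mat s ?x Q k" using low last by cases auto
    qed
  qed auto
  also have "\<dots> \<longleftrightarrow> (\<forall>k<s - 1. vec_mat s (exps u) Q k mod inv_factor k = vec_mat s (exps v) Q k mod inv_factor k)"
    by (simp add: vec_mat_diff mod_eq_dvd_iff)
  also have "\<dots> \<longleftrightarrow> residues u = residues v"
    unfolding residues_def by (auto simp: fun_eq_iff)
  finally show ?thesis .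
qed

lemma vector_with_coords_and_sum:
  obtains x where "\<forall>k<s - 1. vec_mat s x Q k = \<rho> k" "(\<Sum>l<s. x l) = int d"
proof
  define y where "y k = (if k < s - 1 then \<rho> k else sum_weight (s - 1) * int d)" for k
  define x where "x l = (if l < s then vec_mat s y Q' l else 0)" for l
  have xQ: "vec_mat s x Q k = y k" if "k < s" for k
  proof -
    have "vec_mat s x Q k = vec_mat s (vec_mat s y Q') Q k" by (rule vec_mat_cong) (simp add: x_def)
    also have "\<dots> = y k" by (rule vec_mat_inverse[OF Q_left_inverse that])
    finally show ?thesis .
  qed
  show "\<forall>k<s - 1. vec_mat s x Q k = \<rho> k"
  proof (intro allI impI)
    fix k assume k: "k < s - 1"
    then have "vec_mat s x Q k = y k" by (intro xQ) simp
    with k show "vec_mat s x Q k = \<rho> k" by (simp add: y_def)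
  qed
  have "s - 1 < s" using s_ge_2 by simp
  have "(\<Sum>l<s. x l) = vec_mat s x Q (s - 1) * sum_weight (s - 1)" by (rule sum_eq_last_coord)
  also have "\<dots> = sum_weight (s - 1) * sum_weight (s - 1) * int d"
    using xQ[OF \<open>s - 1 < s\<close>] by (simp add: y_def)
  also have "\<dots> = int d" by (simp only: sum_weight_last_square mult_1)
  finally show "(\<Sum>l<s. x l) = int d" .
qed

lemma residues_eqI:
  assumes \<rho>: "\<rho> \<in> (\<Pi>\<^sub>E k\<in>{..<s - 1}. {0..<inv_factor k})"
    and coords: "\<forall>k<s - 1. vec_mat s x Q k = \<rho> k"
    and cong: "\<forall>l<s. class_count dvd exps u l - x l"
  shows "residues u = \<rho>"
proof
  fix k show "residues u k = \<rho> k"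
  proof (cases "k < s - 1")
    case True
    have "class_count dvd vec_mat s (\<lambda>l. exps u l - x l) Q k"
      unfolding vec_mat_def using cong by (intro dvd_sum) simp
    moreover have "inv_factor k dvd class_count"
      unfolding class_count_def using True by (intro dvd_prodI) simp_all
    ultimately have dvd_diff: "inv_factor k dvd vec_mat s (\<lambda>l. exps u l - x l) Q k"
      by (rule dvd_trans[rotated])
    from coords True have "vec_mat s (\<lambda>l. exps u l - x l) Q k = vec_mat s (exps u) Q k - \<rho> k"
      by (subst vec_mat_diff) simp
    with dvd_diff have "inv_factor k dvd vec_mat s (exps u) Q k - \<rho> k" by (simp only:)
    then obtain t where "vec_mat s (exps u) Q k - \<rho> k = inv_factor k * t" by (rule dvdE)
    then have "vec_mat s (exps u) Q k = \<rho> k + inv_factor k * t" by simp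
    moreover have "\<rho> k \<in> {0..<inv_factor k}" using \<rho> True by (auto simp: PiE_iff)
    ultimately show ?thesis
      using True by (simp add: residues_def mod_pos_pos_trivial)
  next
    case False
    then have "\<rho> k = undefined" by (intro PiE_arb[OF \<rho>]) simp
    with False show ?thesis by (simp add: residues_def)
  qed
qed

text \<open>For surjectivity, move a vector with the prescribed coordinates to a monomial by a vector
  \<open>\<equiv> 0 (mod \<Prod> d\<^sub>k)\<close>.\<close>
lemma residues_image:
  assumes large: "int d \<ge> int (s - 1) * class_count"
  shows "residues ` monomials_deg s d = (\<Pi>\<^sub>E k\<in>{..<s - 1}. {0..<inv_factor k})"
proof
  show "residues ` monomials_deg s d \<subseteq> (\<Pi>\<^sub>E k\<in>{..<s - 1}. {0..<inv_factor k})"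
  proof (rule image_subsetI)
    fix u show "residues u \<in> (\<Pi>\<^sub>E k\<in>{..<s - 1}. {0..<inv_factor k})"
      unfolding residues_def restrict_PiE_iff using inv_factor_pos by auto
  qed
next
  show "(\<Pi>\<^sub>E k\<in>{..<s - 1}. {0..<inv_factor k}) \<subseteq> residues ` monomials_deg s d"
  proof
    fix \<rho> assume \<rho>: "\<rho> \<in> (\<Pi>\<^sub>E k\<in>{..<s - 1}. {0..<inv_factor k})"
    obtain x where coords: "\<forall>k<s - 1. vec_mat s x Q k = \<rho> k" and sum_x: "(\<Sum>l<s. x l) = int d"
      by (rule vector_with_coords_and_sum)
    have "s \<ge> 1" using s_ge_2 by simp
    from monomial_congruent_mod[OF this class_count_pos sum_x large]
    obtain u where "u \<in> monomials_deg s d" "\<forall>l<s. class_count dvd exps u l - x l"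
      by blast
    with residues_eqI[OF \<rho> coords] show "\<rho> \<in> residues ` monomials_deg s d" by blast
  qed
qed

lemma card_residue_box: "card (\<Pi>\<^sub>E k\<in>{..<s - 1}. {0..<inv_factor k}) = nat class_count"
proof -
  have "int (\<Prod>k<s - 1. nat (inv_factor k)) = (\<Prod>k<s - 1. inv_factor k)"
    unfolding of_nat_prod by (rule prod.cong) (use inv_factor_pos in \<open>auto intro: less_imp_le\<close>)
  then have "(\<Prod>k<s - 1. nat (inv_factor k)) = nat class_count" unfolding class_count_def by linarith
  moreover have "card (\<Pi>\<^sub>E k\<in>{..<s - 1}. {0..<inv_factor k}) = (\<Prod>k<s - 1. nat (inv_factor k))"
    by (simp add: card_PiE)
  ultimately show ?thesis by simp
qed

lemma eventually_hilbert_fun: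
  "eventually (\<lambda>d. hilbert_fun s (lattice_ideal s L :: 'k::field mpoly set) d = nat class_count) sequentially"
proof (rule eventually_sequentiallyI)
  fix d assume "d \<ge> nat (int (s - 1) * class_count)"
  then have large: "int d \<ge> int (s - 1) * class_count" by linarith
  have "hilbert_fun s (lattice_ideal s L :: 'k mpoly set) d = card (residues ` monomials_deg s d)"
    by (rule hilbert_fun_lattice_ideal) (use homogeneous L_supp exps_diff_mem_L_iff in auto)
  also have "\<dots> = nat class_count" unfolding residues_image[OF large] by (rule card_residue_box)
  finally show "hilbert_fun s (lattice_ideal s L :: 'k mpoly set) d = nat class_count" .
qed

lemma invariant_factor_prod_eq_class_count: "invariant_factor_prod m s D = class_count"
proof -
  have "{i. i < min m s \<and> D i i > 0} = {..<s - 1}"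
  proof (intro set_eqI iffI)
    fix i assume "i \<in> {i. i < min m s \<and> D i i > 0}"
    then have "i < s" "inv_factor i > 0" by (auto simp: inv_factor_def)
    then show "i \<in> {..<s - 1}" using inv_factor_last by (cases "i = s - 1") auto
  next
    fix i assume "i \<in> {..<s - 1}"
    then have "inv_factor i > 0" "i < s" using inv_factor_pos by auto
    then show "i \<in> {i. i < min m s \<and> D i i > 0}" by (auto simp: inv_factor_def split: if_splits)
  qed
  then show ?thesis
    unfolding invariant_factor_prod_def class_count_def
    by (intro prod.cong) (use inv_factor_pos in \<open>auto simp: inv_factor_def split: if_splits\<close>)
qed

end

lemma smith_nf_smith_lattice:
  assumes "s \<ge> 2" "homogeneous_lattice s (row_lattice m s A)"
    "lattice_rank (row_lattice m s A) = s - 1" "smith_nf m s A D"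
  shows "\<exists>P P' Q Q'. smith_lattice s m A D P P' Q Q'"
proof -
  from assms(4) obtain P Q where PQ: "unimodular m P" "unimodular s Q"
      "\<forall>i<m. \<forall>j<s. D i j = mat_mul s (mat_mul m P A) Q i j"
    and D: "\<forall>i<m. \<forall>j<s. i \<noteq> j \<longrightarrow> D i j = 0" "\<forall>i<min m s. D i i \<ge> 0"
      "\<forall>i. i + 1 < min m s \<longrightarrow> D i i dvd D (i + 1) (i + 1)"
    unfolding smith_nf_def by blast
  from PQ(1,2) obtain P' Q' where
    "\<forall>i<m. \<forall>j<m. mat_mul m P P' i j = (if i = j then 1 else 0) \<and> mat_mul m P' P i j = (if i = j then 1 else 0)"
    "\<forall>i<s. \<forall>j<s. mat_mul s Q Q' i j = (if i = j then 1 else 0) \<and> mat_mul s Q' Q i j = (if i = j then 1 else 0)"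
    unfolding unimodular_def by blast
  with assms(1-3) PQ(3) D have "smith_lattice s m A D P P' Q Q'"
    by unfold_locales simp_all
  then show ?thesis by blast
qed

theorem corollary3p14:
  fixes s m :: nat and A D :: "nat \<Rightarrow> nat \<Rightarrow> int"
  assumes "s \<ge> 2"
    and "homogeneous_lattice s (row_lattice m s A)"
    and "lattice_rank (row_lattice m s A) = s - 1"
    and "smith_nf m s A D"
  shows "deg_quot s (lattice_ideal s (row_lattice m s A) :: 'k::field mpoly set)
           = of_int (invariant_factor_prod m s D)"
proof -
  from smith_nf_smith_lattice[OF assms] obtain P P' Q Q' where "smith_lattice s m A D P P' Q Q'"
    by blast
  then interpret smith_lattice s m A D P P' Q Q' .
  have "deg_quot s (lattice_ideal s L :: 'k mpoly set) = of_nat (nat class_count)"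
    by (rule deg_quot_eventually_const[OF eventually_hilbert_fun]) (use class_count_pos in simp)
  then show ?thesis using class_count_pos by (simp add: invariant_factor_prod_eq_class_count)
qed

end
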